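(* Let $\mathsf{T}$ be a rooted plane tree, let $\delta\in\mathcal{O}(\mathsf{T})$, and suppose $v$ wraps $u$ in $\delta$. Then the map $\delta_u^v\colon\mathsf{T}\to 2^{\mathsf{T}}$ defined by $\delta_u^v(v)=\delta(v)\setminus\Delta_{\delta(v)}(u)$ and $\delta_u^v(w)=\delta(w)$ for $w\neq v$ is an ornamentation of $\mathsf{T}$.
   Context: A rooted plane tree $\mathsf{T}$ is a finite tree with a distinguished root, regarded as a poset $\leq_\mathsf{T}$ in which $v'\leq_\mathsf{T} v$ iff $v$ lies on the path from $v'$ to the root. An ornament is a nonempty set of nodes inducing a connected subgraph. For a set $S$ of nodes and $u\in S$, $\Delta_S(u)=\{w\in S:w\leq_\mathsf{T} u\}$. An ornamentation is a map $\delta$ from $\mathsf{T}$ to ornaments such that the unique maximal element of $\delta(v)$ is $v$ and any two sets $\delta(v),\delta(v')$ are nested or disjoint; $\mathcal{O}(\mathsf{T})$ is the set of ornamentations. For distinct nodes $u,v$, we say $v$ wraps $u$ in $\delta$ if $\delta(u)\subseteq\delta(v)$ and there is no node $w$ with $\delta(u)\subsetneq\delta(w)\subsetneq\delta(v)$. *)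

theory Defs
  imports Main
begin

text \<open>The planar ordering of children plays no role in the
  statement and is therefore omitted.\<close>

definition rooted_tree :: "'a set \<Rightarrow> 'a \<Rightarrow> ('a \<Rightarrow> 'a) \<Rightarrow> bool" where
  "rooted_tree V r par \<longleftrightarrow> finite V \<and> r \<in> V \<and> par r = r \<and>
     (\<forall>v\<in>V. par v \<in> V) \<and> (\<forall>v\<in>V. \<exists>k. (par ^^ k) v = r)"

definition tleq :: "('a \<Rightarrow> 'a) \<Rightarrow> 'a \<Rightarrow> 'a \<Rightarrow> bool" where
  "tleq par v' v \<longleftrightarrow> (\<exists>k. (par ^^ k) v' = v)"

definition tless :: "('a \<Rightarrow> 'a) \<Rightarrow> 'a \<Rightarrow> 'a \<Rightarrow> bool" where
  "tless par v' v \<longleftrightarrow> tleq par v' v \<and> v' \<noteq> v"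

definition tadj :: "('a \<Rightarrow> 'a) \<Rightarrow> 'a \<Rightarrow> 'a \<Rightarrow> bool" where
  "tadj par x y \<longleftrightarrow> x \<noteq> y \<and> (par x = y \<or> par y = x)"

definition ornament :: "'a set \<Rightarrow> ('a \<Rightarrow> 'a) \<Rightarrow> 'a set \<Rightarrow> bool" where
  "ornament V par S \<longleftrightarrow> S \<noteq> {} \<and> S \<subseteq> V \<and>
     (\<forall>x\<in>S. \<forall>y\<in>S. (x, y) \<in> {(a, b). a \<in> S \<and> b \<in> S \<and> tadj par a b}\<^sup>*)"

definition is_maximal_in :: "('a \<Rightarrow> 'a) \<Rightarrow> 'a set \<Rightarrow> 'a \<Rightarrow> bool" where
  "is_maximal_in par S w \<longleftrightarrow> w \<in> S \<and> \<not> (\<exists>x\<in>S. tless par w x)"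

definition Delta :: "('a \<Rightarrow> 'a) \<Rightarrow> 'a set \<Rightarrow> 'a \<Rightarrow> 'a set" where
  "Delta par S u = {w \<in> S. tleq par w u}"

text \<open>An ornamentation: each \<delta>(v) is an ornament whose unique maximal element is v,
  and any two \<delta>(v), \<delta>(v') are nested or disjoint.  Values outside V are irrelevant.\<close>
definition ornamentation :: "'a set \<Rightarrow> ('a \<Rightarrow> 'a) \<Rightarrow> ('a \<Rightarrow> 'a set) \<Rightarrow> bool" where
  "ornamentation V par \<delta> \<longleftrightarrow>
     (\<forall>v\<in>V. ornament V par (\<delta> v) \<and> (\<forall>w. is_maximal_in par (\<delta> v) w \<longleftrightarrow> w = v)) \<and>
     (\<forall>v\<in>V. \<forall>v'\<in>V. \<delta> v \<subseteq> \<delta> v' \<or> \<delta> v' \<subseteq> \<delta> v \<or> \<delta> v \<inter> \<delta> v' = {})"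

definition wraps :: "'a set \<Rightarrow> ('a \<Rightarrow> 'a set) \<Rightarrow> 'a \<Rightarrow> 'a \<Rightarrow> bool" where
  "wraps V \<delta> v u \<longleftrightarrow> u \<in> V \<and> v \<in> V \<and> u \<noteq> v \<and> \<delta> u \<subseteq> \<delta> v \<and>
     \<not> (\<exists>w\<in>V. \<delta> u \<subset> \<delta> w \<and> \<delta> w \<subset> \<delta> v)"

end

theory Submission
  imports Defs
begin

text \<open>An ornament with top v is a subtree hanging from v: it lies below v and is closed under
  taking parents until v is reached.  Removing from \<delta>(v) the nodes below u keeps this closure,
  because the removed part is down-closed and does not contain v; so the new set is again an
  ornament with top v.  For laminarity, a set \<delta>(w) inside \<delta>(v) that meets both the removed
  part and the remainder contains a node below u and the node w not below u, hence contains u by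
  convexity and therefore strictly contains \<delta>(u); since v wraps u, \<delta>(w) = \<delta>(v).\<close>

abbreviation induced_edges :: "('a \<Rightarrow> 'a) \<Rightarrow> 'a set \<Rightarrow> ('a \<times> 'a) set" where
  "induced_edges par S \<equiv> {(a, b). a \<in> S \<and> b \<in> S \<and> tadj par a b}"

lemma funpow_fixpoint: "f x = x \<Longrightarrow> (f ^^ n) x = x"
  by (induction n) auto

lemma tleq_trans: "tleq par a b \<Longrightarrow> tleq par b c \<Longrightarrow> tleq par a c"
  unfolding tleq_def by (metis comp_apply funpow_add)

lemma tleq_parent: "tleq par x (par x)"
  unfolding tleq_def by (rule exI[of _ 1]) simp

lemma tless_imp_tleq_parent:
  assumes "tless par a b" shows "tleq par (par a) b"
proof -
  obtain k where k: "(par ^^ k) a = b" and "a \<noteq> b"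
    using assms unfolding tless_def tleq_def by blast
  then obtain m where "k = Suc m" by (cases k) auto
  with k show ?thesis
    unfolding tleq_def by (metis comp_apply funpow_Suc_right)
qed

lemma tleq_fixpoint: "tleq par x y \<Longrightarrow> par x = x \<Longrightarrow> y = x"
  unfolding tleq_def using funpow_fixpoint by metis

lemma tleq_ancestors_linear:
  assumes "tleq par z a" "tleq par z b" shows "tleq par a b \<or> tleq par b a"
proof -
  obtain i j where i: "(par ^^ i) z = a" and j: "(par ^^ j) z = b"
    using assms unfolding tleq_def by blast
  show ?thesis
  proof (cases "i \<le> j")
    case True
    then have "(par ^^ (j - i)) a = b"
      using i j by (metis comp_apply funpow_add le_add_diff_inverse2)
    then show ?thesis unfolding tleq_def by blast
  next
    case False
    then have "(par ^^ (i - j)) b = a"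
      using i j by (metis comp_apply funpow_add le_add_diff_inverse2 nat_le_linear)
    then show ?thesis unfolding tleq_def by blast
  qed
qed

lemma rooted_tree_funpow_root:
  assumes "rooted_tree V r par" "(par ^^ n) x = r" "n \<le> m"
  shows "(par ^^ m) x = r"
proof -
  have "(par ^^ m) x = (par ^^ (m - n)) r"
    using assms(2,3) by (metis comp_apply funpow_add le_add_diff_inverse2)
  then show ?thesis
    using assms(1) funpow_fixpoint unfolding rooted_tree_def by metis
qed

lemma rooted_tree_periodic_point_is_root:
  assumes rt: "rooted_tree V r par" and "x \<in> V" and per: "(par ^^ p) x = x" and "p > 0"
  shows "x = r"
proof -
  obtain n where n: "(par ^^ n) x = r" using rt \<open>x \<in> V\<close> unfolding rooted_tree_def by blast
  have "(par ^^ (p * n)) x = x" using per funpow_fixpoint[of "par ^^ p"] by (metis funpow_mult)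
  moreover have "(par ^^ (p * n)) x = r" using rooted_tree_funpow_root[OF rt n] \<open>p > 0\<close> by simp
  ultimately show ?thesis by simp
qed

lemma tleq_antisym:
  assumes rt: "rooted_tree V r par" and "a \<in> V" and ab: "tleq par a b" and ba: "tleq par b a"
  shows "a = b"
proof -
  obtain i j where i: "(par ^^ i) a = b" and j: "(par ^^ j) b = a"
    using ab ba unfolding tleq_def by blast
  show ?thesis
  proof (cases "i + j = 0")
    case True then show ?thesis using i by simp
  next
    case False
    have "(par ^^ (j + i)) a = a" using i j by (simp add: funpow_add)
    moreover have "j + i > 0" using False by linarith
    ultimately have "a = r" using rooted_tree_periodic_point_is_root[OF rt \<open>a \<in> V\<close>] by blast
    then show ?thesis using i rt funpow_fixpoint unfolding rooted_tree_def by metis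
  qed
qed

text \<open>A walk that leaves the down-set of y can only do so along the edge from y to its parent.\<close>

lemma induced_walk_leaving_down_set:
  assumes "(x, z) \<in> (induced_edges par S)\<^sup>*" "tleq par x y" "\<not> tleq par z y"
  shows "y \<in> S"
  using assms
proof (induction z rule: rtrancl_induct)
  case base
  then show ?case by simp
next
  case (step c d)
  show ?case
  proof (cases "tleq par c y")
    case False
    then show ?thesis using step.IH step.prems by blast
  next
    case True
    have "c \<in> S" "tadj par c d" using step.hyps(2) by auto
    moreover have "par d \<noteq> c"
      using True step.prems(2) tleq_parent tleq_trans by metis
    ultimately have "par c = d" "c \<noteq> d" unfolding tadj_def by auto
    then have "c = y"
      using True step.prems(2) tless_imp_tleq_parent unfolding tless_def by metis
    then show ?thesis using \<open>c \<in> S\<close> by simp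
  qed
qed

lemma ornament_convex:
  assumes rt: "rooted_tree V r par" and S: "ornament V par S" and "x \<in> S" "v \<in> S"
    and xy: "tleq par x y" and yv: "tleq par y v"
  shows "y \<in> S"
proof (cases "tleq par v y")
  case True
  have "v \<in> V" using S \<open>v \<in> S\<close> unfolding ornament_def by blast
  then have "v = y" using tleq_antisym[OF rt _ True yv] by blast
  then show ?thesis using \<open>v \<in> S\<close> by simp
next
  case False
  have "(x, v) \<in> (induced_edges par S)\<^sup>*"
    using S \<open>x \<in> S\<close> \<open>v \<in> S\<close> unfolding ornament_def by auto
  then show ?thesis by (rule induced_walk_leaving_down_set[OF _ xy False])
qed

text \<open>Take the highest ancestor of x in S before the root is reached.\<close>

lemma exists_maximal_above:
  assumes rt: "rooted_tree V r par" and "x \<in> V" "x \<in> S"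
  shows "\<exists>y. is_maximal_in par S y \<and> tleq par x y"
proof -
  obtain n where n: "(par ^^ n) x = r" using rt \<open>x \<in> V\<close> unfolding rooted_tree_def by blast
  define K where "K = {k. k \<le> n \<and> (par ^^ k) x \<in> S}"
  have "0 \<in> K" unfolding K_def using \<open>x \<in> S\<close> by simp
  moreover have "finite K" unfolding K_def by simp
  ultimately have k: "Max K \<in> K" and kmax: "\<And>m. m \<in> K \<Longrightarrow> m \<le> Max K"
    using Max_in by auto
  define y where "y = (par ^^ Max K) x"
  have "is_maximal_in par S y"
    unfolding is_maximal_in_def
  proof (intro conjI notI)
    show "y \<in> S" using k unfolding K_def y_def by simp
    assume "\<exists>z\<in>S. tless par y z"
    then obtain z m where "z \<in> S" "z \<noteq> y" and z: "(par ^^ (m + Max K)) x = z"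
      unfolding tless_def tleq_def y_def by (metis comp_apply funpow_add)
    then have "m \<noteq> 0" unfolding y_def by (metis add_0)
    have "Max K < m + Max K" using \<open>m \<noteq> 0\<close> by simp
    have "m + Max K \<notin> K" using kmax \<open>Max K < m + Max K\<close> by (meson not_le)
    then have "n < m + Max K" using z \<open>z \<in> S\<close> unfolding K_def by auto
    then have "z = r" using z rooted_tree_funpow_root[OF rt n] by simp
    then have "n \<in> K" unfolding K_def using n \<open>z \<in> S\<close> by simp
    then have "y = r" using kmax rooted_tree_funpow_root[OF rt n] unfolding y_def by simp
    then show False using \<open>z = r\<close> \<open>z \<noteq> y\<close> by simp
  qed
  then show ?thesis unfolding y_def tleq_def by blast
qed

definition rooted_subtree :: "('a \<Rightarrow> 'a) \<Rightarrow> 'a set \<Rightarrow> 'a \<Rightarrow> bool" where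
  "rooted_subtree par S v \<longleftrightarrow>
     v \<in> S \<and> (\<forall>x\<in>S. tleq par x v) \<and> (\<forall>x\<in>S. x \<noteq> v \<longrightarrow> par x \<in> S)"

lemma rooted_subtree_if_ornament:
  assumes rt: "rooted_tree V r par" and S: "ornament V par S"
    and "v \<in> S" and below: "\<forall>x\<in>S. tleq par x v"
  shows "rooted_subtree par S v"
  unfolding rooted_subtree_def
proof (intro conjI ballI impI)
  show "v \<in> S" by fact
  show "tleq par x v" if "x \<in> S" for x
    using below that by blast
  fix x assume "x \<in> S" "x \<noteq> v"
  then have "tless par x v" using below unfolding tless_def by blast
  then have "tleq par (par x) v" by (rule tless_imp_tleq_parent)
  then show "par x \<in> S" by (rule ornament_convex[OF rt S \<open>x \<in> S\<close> \<open>v \<in> S\<close> tleq_parent])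
qed

lemma rooted_subtree_Diff_Delta:
  assumes "rooted_subtree par S v" and "\<not> tleq par v u"
  shows "rooted_subtree par (S - Delta par S u) v"
proof -
  have "tleq par (par x) u \<Longrightarrow> tleq par x u" for x
    by (rule tleq_trans[OF tleq_parent])
  then show ?thesis using assms unfolding rooted_subtree_def Delta_def by auto
qed

lemma ornament_if_rooted_subtree:
  assumes "S \<subseteq> V" and S: "rooted_subtree par S v"
  shows "ornament V par S"
proof -
  let ?E = "induced_edges par S"
  have "(x, v) \<in> ?E\<^sup>*" if "x \<in> S" "(par ^^ k) x = v" for x k
    using that
  proof (induction k arbitrary: x)
    case 0
    then show ?case by simp
  next
    case (Suc k)
    show ?case
    proof (cases "x = v")
      case False
      have "par x \<in> S" using S Suc.prems False unfolding rooted_subtree_def by blast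
      moreover have "par x \<noteq> x" using Suc.prems False funpow_fixpoint by metis
      moreover have "(par ^^ k) (par x) = v" using Suc.prems(2) by (simp add: funpow_swap1)
      ultimately have "(x, par x) \<in> ?E" "(par x, v) \<in> ?E\<^sup>*"
        using Suc.IH \<open>x \<in> S\<close> unfolding tadj_def by auto
      then show ?thesis by (rule converse_rtrancl_into_rtrancl)
    qed simp
  qed
  then have to_v: "(x, v) \<in> ?E\<^sup>*" if "x \<in> S" for x
    using that S unfolding rooted_subtree_def tleq_def by blast
  have "sym ?E" unfolding sym_def tadj_def by blast
  then have "(x, y) \<in> ?E\<^sup>*" if "x \<in> S" "y \<in> S" for x y
    using to_v[OF that(1)] to_v[OF that(2)] by (meson rtrancl_trans sym_rtrancl symD)
  then show ?thesis
    using assms unfolding ornament_def rooted_subtree_def by blast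
qed

lemma is_maximal_in_rooted_subtree_iff:
  assumes rt: "rooted_tree V r par" and "S \<subseteq> V" and S: "rooted_subtree par S v"
  shows "is_maximal_in par S w \<longleftrightarrow> w = v"
proof
  assume w: "is_maximal_in par S w"
  show "w = v"
  proof (rule ccontr)
    assume "w \<noteq> v"
    then have "par w \<in> S" "tleq par w v"
      using S w unfolding rooted_subtree_def is_maximal_in_def by auto
    moreover have "par w \<noteq> w" using \<open>w \<noteq> v\<close> \<open>tleq par w v\<close> tleq_fixpoint by metis
    ultimately show False using w tleq_parent unfolding is_maximal_in_def tless_def by metis
  qed
next
  have "v \<in> V" using S \<open>S \<subseteq> V\<close> unfolding rooted_subtree_def by blast
  then show "is_maximal_in par S w" if "w = v"
    using S tleq_antisym[OF rt] that
    unfolding rooted_subtree_def is_maximal_in_def tless_def by blast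
qed

lemma ornamentation_ornament:
  "ornamentation V par \<delta> \<Longrightarrow> w \<in> V \<Longrightarrow> ornament V par (\<delta> w)"
  unfolding ornamentation_def by blast

lemma ornamentation_is_maximal_in_iff:
  "ornamentation V par \<delta> \<Longrightarrow> w \<in> V \<Longrightarrow> is_maximal_in par (\<delta> w) x \<longleftrightarrow> x = w"
  unfolding ornamentation_def by blast

lemma ornamentation_laminar:
  "ornamentation V par \<delta> \<Longrightarrow> a \<in> V \<Longrightarrow> b \<in> V \<Longrightarrow>
    \<delta> a \<subseteq> \<delta> b \<or> \<delta> b \<subseteq> \<delta> a \<or> \<delta> a \<inter> \<delta> b = {}"
  unfolding ornamentation_def by blast

lemma ornamentation_mem_self:
  "ornamentation V par \<delta> \<Longrightarrow> w \<in> V \<Longrightarrow> w \<in> \<delta> w"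
  using ornamentation_is_maximal_in_iff[of V par \<delta> w w] unfolding is_maximal_in_def by blast

lemma ornamentation_subset:
  "ornamentation V par \<delta> \<Longrightarrow> w \<in> V \<Longrightarrow> \<delta> w \<subseteq> V"
  using ornamentation_ornament[of V par \<delta> w] unfolding ornament_def by blast

lemma ornamentation_below_top:
  assumes rt: "rooted_tree V r par" and \<delta>: "ornamentation V par \<delta>" and "w \<in> V" "x \<in> \<delta> w"
  shows "tleq par x w"
proof -
  have "x \<in> V" using ornamentation_subset[OF \<delta> \<open>w \<in> V\<close>] \<open>x \<in> \<delta> w\<close> by blast
  then obtain y where "is_maximal_in par (\<delta> w) y" "tleq par x y"
    using exists_maximal_above[OF rt _ \<open>x \<in> \<delta> w\<close>] by blast
  moreover have "y = w"
    using ornamentation_is_maximal_in_iff[OF \<delta> \<open>w \<in> V\<close>] \<open>is_maximal_in par (\<delta> w) y\<close> by blast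
  ultimately show ?thesis by simp
qed

lemma ornamentation_fun_upd:
  assumes \<delta>: "ornamentation V par \<delta>" and "v \<in> V"
    and S: "ornament V par S" and top: "\<forall>w. is_maximal_in par S w \<longleftrightarrow> w = v"
    and laminar: "\<forall>w\<in>V. S \<subseteq> \<delta> w \<or> \<delta> w \<subseteq> S \<or> S \<inter> \<delta> w = {}"
  shows "ornamentation V par (\<delta>(v := S))"
proof -
  let ?\<delta>' = "\<delta>(v := S)"
  have "ornament V par (?\<delta>' a)" if "a \<in> V" for a
    using S ornamentation_ornament[OF \<delta> that] by (cases "a = v") simp_all
  moreover have "is_maximal_in par (?\<delta>' a) x \<longleftrightarrow> x = a" if "a \<in> V" for a x
    using top ornamentation_is_maximal_in_iff[OF \<delta> that] by (cases "a = v") simp_all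
  moreover have "?\<delta>' a \<subseteq> ?\<delta>' b \<or> ?\<delta>' b \<subseteq> ?\<delta>' a \<or> ?\<delta>' a \<inter> ?\<delta>' b = {}"
    if "a \<in> V" "b \<in> V" for a b
  proof (cases "a = v"; cases "b = v")
    assume "a \<noteq> v" "b \<noteq> v"
    then show ?thesis using ornamentation_laminar[OF \<delta> that] by simp
  qed (use laminar that in \<open>auto simp: Int_commute\<close>)
  ultimately show ?thesis unfolding ornamentation_def by blast
qed

lemma wraps_eq_if_meets_Delta:
  assumes rt: "rooted_tree V r par" and \<delta>: "ornamentation V par \<delta>" and wr: "wraps V \<delta> v u"
    and "w \<in> V" and wv: "\<delta> w \<subseteq> \<delta> v"
    and "z \<in> \<delta> w" "tleq par z u" and wu: "\<not> tleq par w u"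
  shows "\<delta> w = \<delta> v"
proof -
  have "u \<in> V" using wr unfolding wraps_def by blast
  have "tleq par z w" using ornamentation_below_top[OF rt \<delta> \<open>w \<in> V\<close> \<open>z \<in> \<delta> w\<close>] .
  then have "tleq par u w" using tleq_ancestors_linear[OF \<open>tleq par z u\<close>] wu by blast
  then have "u \<in> \<delta> w"
    using ornament_convex[OF rt ornamentation_ornament[OF \<delta> \<open>w \<in> V\<close>] \<open>z \<in> \<delta> w\<close>
        ornamentation_mem_self[OF \<delta> \<open>w \<in> V\<close>] \<open>tleq par z u\<close>] by blast
  moreover have "w \<notin> \<delta> u"
    using ornamentation_below_top[OF rt \<delta> \<open>u \<in> V\<close>] wu by blast
  ultimately have "\<delta> u \<subset> \<delta> w"
    using ornamentation_laminar[OF \<delta> \<open>u \<in> V\<close> \<open>w \<in> V\<close>]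
      ornamentation_mem_self[OF \<delta>] \<open>u \<in> V\<close> \<open>w \<in> V\<close> by blast
  then show ?thesis using wr wv \<open>w \<in> V\<close> unfolding wraps_def by blast
qed

lemma wraps_Diff_Delta_laminar:
  assumes rt: "rooted_tree V r par" and \<delta>: "ornamentation V par \<delta>" and wr: "wraps V \<delta> v u"
    and "w \<in> V"
  defines "D \<equiv> \<delta> v - Delta par (\<delta> v) u"
  shows "D \<subseteq> \<delta> w \<or> \<delta> w \<subseteq> D \<or> D \<inter> \<delta> w = {}"
proof -
  have "v \<in> V" using wr unfolding wraps_def by blast
  have "D \<subseteq> \<delta> v" unfolding D_def by blast
  consider "\<delta> v \<subseteq> \<delta> w" | "\<delta> v \<inter> \<delta> w = {}" | "\<delta> w \<subseteq> \<delta> v"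
    using ornamentation_laminar[OF \<delta> \<open>v \<in> V\<close> \<open>w \<in> V\<close>] by blast
  then show ?thesis
  proof cases
    case 3
    show ?thesis
    proof (cases "tleq par w u")
      case True
      then have "tleq par x u" if "x \<in> \<delta> w" for x
        using tleq_trans[OF ornamentation_below_top[OF rt \<delta> \<open>w \<in> V\<close> that]] by blast
      then have "D \<inter> \<delta> w = {}" unfolding D_def Delta_def by blast
      then show ?thesis by blast
    next
      case False
      show ?thesis
      proof (cases "\<delta> w \<subseteq> D")
        case False
        then obtain z where "z \<in> \<delta> w" "tleq par z u" using 3 unfolding D_def Delta_def by blast
        then have "\<delta> w = \<delta> v"
          using wraps_eq_if_meets_Delta[OF rt \<delta> wr \<open>w \<in> V\<close> 3] \<open>\<not> tleq par w u\<close> by blast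
        then show ?thesis using \<open>D \<subseteq> \<delta> v\<close> by blast
      qed simp
    qed
  qed (use \<open>D \<subseteq> \<delta> v\<close> in blast)+
qed

theorem lemma2p2:
  assumes "rooted_tree V r par"
    and "ornamentation V par \<delta>"
    and "wraps V \<delta> v u"
  shows "ornamentation V par (\<delta>(v := \<delta> v - Delta par (\<delta> v) u))"
proof -
  note rt = assms(1) and \<delta> = assms(2) and wr = assms(3)
  define D where "D = \<delta> v - Delta par (\<delta> v) u"
  have "u \<in> V" "v \<in> V" "u \<noteq> v" "\<delta> u \<subseteq> \<delta> v" using wr unfolding wraps_def by blast+
  have below_v: "\<forall>x\<in>\<delta> v. tleq par x v"
    using ornamentation_below_top[OF rt \<delta> \<open>v \<in> V\<close>] by blast
  then have "tleq par u v"
    using ornamentation_mem_self[OF \<delta> \<open>u \<in> V\<close>] \<open>\<delta> u \<subseteq> \<delta> v\<close> by blast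
  then have "\<not> tleq par v u" using tleq_antisym[OF rt \<open>u \<in> V\<close>] \<open>u \<noteq> v\<close> by blast
  have "rooted_subtree par (\<delta> v) v"
    using rooted_subtree_if_ornament[OF rt ornamentation_ornament[OF \<delta> \<open>v \<in> V\<close>]
        ornamentation_mem_self[OF \<delta> \<open>v \<in> V\<close>] below_v] .
  then have D: "rooted_subtree par D v"
    unfolding D_def using \<open>\<not> tleq par v u\<close> by (rule rooted_subtree_Diff_Delta)
  have "D \<subseteq> V" using ornamentation_subset[OF \<delta> \<open>v \<in> V\<close>] unfolding D_def by blast
  have "ornamentation V par (\<delta>(v := D))"
  proof (rule ornamentation_fun_upd[OF \<delta> \<open>v \<in> V\<close>])
    show "ornament V par D" using ornament_if_rooted_subtree[OF \<open>D \<subseteq> V\<close> D] .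
    show "\<forall>w. is_maximal_in par D w \<longleftrightarrow> w = v"
      using is_maximal_in_rooted_subtree_iff[OF rt \<open>D \<subseteq> V\<close> D] by blast
    show "\<forall>w\<in>V. D \<subseteq> \<delta> w \<or> \<delta> w \<subseteq> D \<or> D \<inter> \<delta> w = {}"
      using wraps_Diff_Delta_laminar[OF rt \<delta> wr] unfolding D_def by blast
  qed
  then show ?thesis unfolding D_def .
qed

end
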